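(* For all positive integers $k$ and $T_c$ with $T_c\ge p^2$, $N_{p\cdot T_c,\,k+1}=N_{T_c,\,k}$.
   Context: $p$ is a prime with $p>3$ and $n>1$ is an integer with $\gcd(n,p)=\gcd(n,p^2-1)=1$, so the Chebyshev polynomial $T_n$ (first kind: $T_0=1$, $T_1=x$, $T_d=2xT_{d-1}-T_{d-2}$) induces a permutation of $\mathbb{Z}_{p^k}$ for every $k\ge1$. The functional graph $F_{p^k}$ has vertex set $\mathbb{Z}_{p^k}$ and a directed edge from $x$ to $y$ iff $y=T_n(x)\bmod p^k$; it is a disjoint union of directed cycles. $N_{a,k}$ denotes the number of cycles of length $a$ in $F_{p^k}$. *)

theory Defs
  imports "HOL-Computational_Algebra.Primes"
begin

fun cheb :: "nat \<Rightarrow> int \<Rightarrow> int" where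
  "cheb 0 x = 1"
| "cheb (Suc 0) x = x"
| "cheb (Suc (Suc d)) x = 2 * x * cheb (Suc d) x - cheb d x"

definition cheb_map :: "int \<Rightarrow> nat \<Rightarrow> nat \<Rightarrow> int \<Rightarrow> int" where
  "cheb_map p n k x = cheb n x mod p ^ k"

definition vertices :: "int \<Rightarrow> nat \<Rightarrow> int set" where
  "vertices p k = {0..<p ^ k}"

definition cycle_of :: "int \<Rightarrow> nat \<Rightarrow> nat \<Rightarrow> int \<Rightarrow> int set" where
  "cycle_of p n k x = {(cheb_map p n k ^^ i) x | i. True}"

definition num_cycles :: "int \<Rightarrow> nat \<Rightarrow> nat \<Rightarrow> nat \<Rightarrow> nat" where
  "num_cycles p n a k =
     card {C. \<exists>x \<in> vertices p k. C = cycle_of p n k x \<and> card C = a}"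

end

theory Submission
  imports Defs "HOL-Number_Theory.Number_Theory"
begin

(* T_n permutes Z/p^k. Modulo p, the sequence T_j(x) is periodic in j with period p - 1 or p + 1
   (Euler's criterion), a divisor of p^2 - 1; as T_m (T_n x) = T_(mn) x, T_m inverts T_n when
   m n = 1 mod p^2 - 1. Hensel lifting applies because T_n' = n U_(n-1) never vanishes mod p.

   Let L be the period of x mod p^k, T_(n^L) x = x + p^k c and a = (T_(n^L))'(x). Modulo p^(k+1),
   L steps map x + p^k t to x + p^k (c + a t), so the period mod p^(k+1) is L times the least m with
   p | c (1 + a + ... + a^(m-1)). If a = 1 and p does not divide c (x is good), then m = p, and a
   second-order Taylor expansion, using p > 3, shows that x is good again one level up. A point that
   is not good has period at most p (p - 1) < p^2: its period mod p is at most p, and lifting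
   multiplies it at most once, by a divisor of p - 1.

   Hence on a cycle of length T >= p^2 mod p^k all points are good; the preimage of the cycle mod
   p^(k+1) is a single cycle of length p T, and every cycle of length p T mod p^(k+1) projects onto
   a cycle of length T. *)

section \<open>Chebyshev polynomials over the integers\<close>

(* cheb2 j = U_{j-1}, the Chebyshev polynomial of the second kind shifted by one,
   so that the derivative of T_j is j * cheb2 j. *)
fun cheb2 :: "nat \<Rightarrow> int \<Rightarrow> int" where
  "cheb2 0 x = 0"
| "cheb2 (Suc 0) x = 1"
| "cheb2 (Suc (Suc d)) x = 2 * x * cheb2 (Suc d) x - cheb2 d x"

definition cheb_deriv :: "nat \<Rightarrow> int \<Rightarrow> int" where
  "cheb_deriv j x = int j * cheb2 j x"

(* Half the second derivative of T_j; the recurrence is that of T_j differentiated twice. *)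
fun cheb_deriv2 :: "nat \<Rightarrow> int \<Rightarrow> int" where
  "cheb_deriv2 0 x = 0"
| "cheb_deriv2 (Suc 0) x = 0"
| "cheb_deriv2 (Suc (Suc d)) x =
     2 * x * cheb_deriv2 (Suc d) x + 2 * cheb_deriv (Suc d) x - cheb_deriv2 d x"

lemma cheb_Suc_cheb2_Suc:
  "cheb (Suc j) x = x * cheb j x + (x^2 - 1) * cheb2 j x \<and> cheb2 (Suc j) x = cheb j x + x * cheb2 j x"
proof (induction j rule: induct_nat_012)
  case (ge2 j)
  then show ?case
    by (simp only: cheb.simps cheb2.simps) (simp add: algebra_simps power2_eq_square)
qed (auto simp: algebra_simps power2_eq_square)

lemma cheb_pell: "cheb j x ^ 2 - (x^2 - 1) * cheb2 j x ^ 2 = 1"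
proof (induction j)
  case (Suc j)
  have "(x * cheb j x + (x^2 - 1) * cheb2 j x)^2 - (x^2 - 1) * (cheb j x + x * cheb2 j x)^2
      = cheb j x ^ 2 - (x^2 - 1) * cheb2 j x ^ 2"
    by (simp add: algebra_simps power2_eq_square)
  then show ?case using Suc cheb_Suc_cheb2_Suc by simp
qed simp

lemma cheb_deriv_Suc_Suc:
  "cheb_deriv (Suc (Suc j)) x = 2 * cheb (Suc j) x + 2 * x * cheb_deriv (Suc j) x - cheb_deriv j x"
proof -
  have "cheb (Suc j) x = x * cheb2 (Suc j) x - cheb2 j x"
    using cheb_Suc_cheb2_Suc[of j x] by (simp add: algebra_simps power2_eq_square)
  then show ?thesis unfolding cheb_deriv_def by (simp add: algebra_simps)
qed

lemma cheb_at_one: "cheb j 1 = 1"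
  by (induction j rule: induct_nat_012) auto

lemma cheb_at_minus_one: "cheb j (-1) = (-1) ^ j"
  by (induction j rule: induct_nat_012) auto

lemma cheb2_at_one: "cheb2 j 1 = int j"
  by (induction j rule: induct_nat_012) auto

lemma cheb2_at_minus_one: "cheb2 j (-1) = (-1) ^ Suc j * int j"
  by (induction j rule: induct_nat_012) (auto simp: algebra_simps)

lemma cheb_cong: "[x = y] (mod m) \<Longrightarrow> [cheb j x = cheb j y] (mod m)"
  by (induction j rule: induct_nat_012) (simp_all add: cong_diff cong_mult)

lemma cheb2_cong: "[x = y] (mod m) \<Longrightarrow> [cheb2 j x = cheb2 j y] (mod m)"
  by (induction j rule: induct_nat_012) (simp_all add: cong_diff cong_mult)

lemma cheb_taylor2:
  "h^3 dvd cheb j (x + h) - cheb j x - h * cheb_deriv j x - h^2 * cheb_deriv2 j x"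
proof (induction j rule: induct_nat_012)
  case (ge2 j)
  from ge2.IH(1) obtain r0
    where r0: "cheb j (x + h) - cheb j x - h * cheb_deriv j x - h^2 * cheb_deriv2 j x = h^3 * r0"
    by (elim dvdE)
  from ge2.IH(2) obtain r1
    where r1: "cheb (Suc j) (x + h) - cheb (Suc j) x - h * cheb_deriv (Suc j) x
                 - h^2 * cheb_deriv2 (Suc j) x = h^3 * r1"
    by (elim dvdE)
  have "cheb (Suc (Suc j)) (x + h) - cheb (Suc (Suc j)) x - h * cheb_deriv (Suc (Suc j)) x
          - h^2 * cheb_deriv2 (Suc (Suc j)) x
      = h^3 * (2 * (x + h) * r1 - r0 + 2 * cheb_deriv2 (Suc j) x)"
    unfolding cheb.simps cheb_deriv_Suc_Suc cheb_deriv2.simps using r0 r1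
    by (simp add: algebra_simps power2_eq_square power3_eq_cube)
  then show ?case by simp
qed (simp_all add: cheb_deriv_def)

lemma cheb_taylor1: "h^2 dvd cheb j (x + h) - cheb j x - h * cheb_deriv j x"
proof -
  have "h^2 dvd h^3" by (simp add: le_imp_power_dvd)
  then have "h^2 dvd cheb j (x + h) - cheb j x - h * cheb_deriv j x - h^2 * cheb_deriv2 j x"
    using cheb_taylor2 dvd_trans by blast
  then have "h^2 dvd (cheb j (x + h) - cheb j x - h * cheb_deriv j x - h^2 * cheb_deriv2 j x)
                + h^2 * cheb_deriv2 j x"
    by (rule dvd_add) simp
  then show ?thesis by simp
qed

(* Every complex z is (w + 1/w)/2 for some w, and T_j ((w + 1/w)/2) = (w^j + w^-j)/2: this gives
   T_a (T_b x) = T_(ab) x and the binomial expansion of T_j. *)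
fun cheb_complex :: "nat \<Rightarrow> complex \<Rightarrow> complex" where
  "cheb_complex 0 z = 1"
| "cheb_complex (Suc 0) z = z"
| "cheb_complex (Suc (Suc d)) z = 2 * z * cheb_complex (Suc d) z - cheb_complex d z"

lemma of_int_cheb: "of_int (cheb j x) = cheb_complex j (of_int x)"
  by (induction j rule: induct_nat_012) auto

lemma cheb_complex_joukowski:
  assumes "w \<noteq> 0"
  shows "cheb_complex j ((w + inverse w) / 2) = (w^j + inverse w ^ j) / 2"
proof (induction j rule: induct_nat_012)
  case (ge2 j)
  define v where "v = inverse w"
  have "w * v = 1" using assms v_def by simp
  then have "(w + v) * (w * w^j + v * v^j) - (w^j + v^j) = w * w * w^j + v * v * v^j"
    by (simp add: algebra_simps) (metis mult.assoc mult.left_commute mult_1)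
  moreover have "2 * ((w + v) / 2) * ((w * w^j + v * v^j) / 2) - (w^j + v^j) / 2
      = ((w + v) * (w * w^j + v * v^j) - (w^j + v^j)) / 2"
    by (simp add: field_simps)
  ultimately have "2 * ((w + v) / 2) * ((w * w^j + v * v^j) / 2) - (w^j + v^j) / 2
      = (w * w * w^j + v * v * v^j) / 2"
    by simp
  moreover have "cheb_complex j ((w + v) / 2) = (w^j + v^j) / 2"
    using ge2.IH(1) by (simp add: v_def)
  moreover have "cheb_complex (Suc j) ((w + v) / 2) = (w * w^j + v * v^j) / 2"
    using ge2.IH(2) by (simp only: v_def power_Suc)
  ultimately show ?case
    unfolding cheb_complex.simps v_def[symmetric] by (simp only: power_Suc mult.assoc)
qed auto

lemma joukowski_surj:
  fixes z :: complex
  shows "\<exists>w. w \<noteq> 0 \<and> z = (w + inverse w) / 2"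
proof -
  define s where "s = csqrt (z^2 - 1)"
  have "(z + s) * (z - s) = 1" unfolding s_def by (simp add: algebra_simps power2_eq_square[symmetric])
  then have "z + s \<noteq> 0" "inverse (z + s) = z - s" by (auto intro: inverse_unique)
  then show ?thesis by (intro exI[of _ "z + s"]) simp
qed

lemma cheb_mult: "cheb a (cheb b x) = cheb (a * b) x"
proof -
  obtain w :: complex where w: "w \<noteq> 0" "of_int x = (w + inverse w) / 2"
    using joukowski_surj by blast
  have b: "(of_int (cheb b x) :: complex) = (w^b + inverse (w^b)) / 2"
    unfolding of_int_cheb w(2) cheb_complex_joukowski[OF w(1)] by (simp add: power_inverse)
  have "(of_int (cheb a (cheb b x)) :: complex) = cheb_complex a ((w^b + inverse (w^b)) / 2)"
    by (simp only: of_int_cheb[of a] b)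
  also have "\<dots> = (w^(a * b) + inverse w ^ (a * b)) / 2"
    using w(1) by (simp add: cheb_complex_joukowski power_inverse power_mult[symmetric] mult.commute)
  also have "\<dots> = of_int (cheb (a * b) x)"
    unfolding of_int_cheb w(2) cheb_complex_joukowski[OF w(1)] ..
  finally show ?thesis by (simp only: of_int_eq_iff)
qed

lemma cheb_binomial:
  "cheb j x = (\<Sum>i\<le>j. int (j choose i) * x^(j - i) * (if even i then (x^2 - 1)^(i div 2) else 0))"
proof -
  define X where "X = (of_int x :: complex)"
  obtain w where w: "w \<noteq> 0" "X = (w + inverse w) / 2"
    using joukowski_surj by blast
  define s where "s = w - X"
  have inv: "inverse w = X - s" using w(2) unfolding s_def by (simp add: field_simps)
  have "X^2 - s^2 = inverse w * w"
    unfolding inv by (simp add: s_def power2_eq_square algebra_simps)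
  then have s2: "s^2 = X^2 - 1" using w(1) by (simp add: eq_diff_eq diff_eq_eq add.commute)
  have pm: "s^i + (-s)^i = 2 * of_int (if even i then (x^2 - 1)^(i div 2) else 0)" for i
  proof (cases "even i")
    case True
    then obtain m where "i = 2 * m" by blast
    then show ?thesis using True by (simp add: power_mult s2 X_def)
  qed (simp add: power_minus_odd)
  have binom: "(s + X)^j + (-s + X)^j = (\<Sum>i\<le>j. of_nat (j choose i) * (s^i + (-s)^i) * X^(j - i))"
    unfolding binomial_ring by (simp add: sum.distrib[symmetric] algebra_simps)
  have "(of_int (cheb j x) :: complex) = cheb_complex j X"
    by (simp add: of_int_cheb X_def)
  also have "\<dots> = (w^j + inverse w ^ j) / 2"
    unfolding w(2) by (rule cheb_complex_joukowski[OF w(1)])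
  also have "\<dots> = ((s + X)^j + (-s + X)^j) / 2"
    by (simp add: inv s_def)
  also have "\<dots> = (\<Sum>i\<le>j. of_nat (j choose i) * (s^i + (-s)^i) * X^(j - i)) / 2"
    by (simp only: binom)
  also have "\<dots> = of_int (\<Sum>i\<le>j. int (j choose i) * x^(j - i) *
                      (if even i then (x^2 - 1)^(i div 2) else 0))"
    unfolding pm sum_divide_distrib by (simp add: X_def algebra_simps)
  finally show ?thesis by (simp only: of_int_eq_iff)
qed

section \<open>Reduction modulo a prime\<close>

lemma fermat_little_int:
  assumes "prime p"
  shows "[x ^ p = x] (mod int p)"
proof -
  define y where "y = nat (x mod int p)"
  have p0: "p > 0" using assms prime_gt_0_nat by blast
  have y: "int y = x mod int p" unfolding y_def using p0 by simp
  have "[y ^ p = y] (mod p)"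
  proof (cases "p dvd y")
    case True
    moreover have "y dvd y ^ p" using p0 by simp
    ultimately show ?thesis by (simp add: cong_def dvd_imp_mod_0 dvd_trans[of p y])
  next
    case False
    then have "[y ^ (p - 1) * y = 1 * y] (mod p)"
      using fermat_theorem assms by (blast intro: cong_scalar_right)
    then show ?thesis using p0 by (simp add: power_Suc2[symmetric])
  qed
  then have "[(x mod int p) ^ p = x mod int p] (mod int p)"
    unfolding y[symmetric] by (metis cong_int_iff of_nat_power)
  then show ?thesis by (metis cong_def mod_mod_trivial power_mod)
qed

lemma cheb_prime_cong:
  assumes "prime p" "odd p"
  shows "[cheb p x = x] (mod int p)"
proof -
  define t where "t i = int (p choose i) * x^(p - i) * (if even i then (x^2 - 1)^(i div 2) else 0)"
    for i
  have sum: "cheb p x = t 0 + (\<Sum>i<p. t (Suc i))"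
    unfolding cheb_binomial t_def by (rule sum.atMost_shift)
  have "int p dvd t (Suc i)" if "i < p" for i
  proof (cases "Suc i = p")
    case False
    then have "p dvd (p choose Suc i)"
      using that assms(1) by (intro dvd_choose_prime) auto
    then show ?thesis
      unfolding t_def by (intro dvd_mult2) (simp only: int_dvd_int_iff)
  qed (use assms(2) in \<open>simp add: t_def\<close>)
  then have "[(\<Sum>i<p. t (Suc i)) = 0] (mod int p)"
    by (auto simp: cong_0_iff intro!: dvd_sum)
  moreover have "[t 0 = x] (mod int p)"
    using fermat_little_int[OF assms(1)] by (simp add: t_def)
  ultimately have "[t 0 + (\<Sum>i<p. t (Suc i)) = x + 0] (mod int p)"
    by (intro cong_add)
  then show ?thesis
    unfolding sum by simp
qed

lemma cheb_Suc_prime_cong: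
  assumes "prime p" "odd p"
  shows "[cheb (Suc p) x = x^2 + (x^2 - 1) * (x^2 - 1)^((p - 1) div 2)] (mod int p)"
proof -
  define t where "t i = int (Suc p choose i) * x^(Suc p - i) * (if even i then (x^2 - 1)^(i div 2) else 0)"
    for i
  have "cheb (Suc p) x = (\<Sum>i\<le>Suc p. t i)"
    unfolding cheb_binomial t_def ..
  also have "\<dots> = t 0 + (\<Sum>i<Suc p. t (Suc i))"
    by (rule sum.atMost_shift)
  finally have sum: "cheb (Suc p) x = t 0 + (\<Sum>i<p. t (Suc i)) + t (Suc p)"
    by simp
  have "int p dvd t (Suc i)" if "i < p" for i
  proof (cases "odd (Suc i)")
    case False
    then have "Suc i \<noteq> p" using assms(2) by auto
    then have "0 < i" "Suc i < p" using that False by (auto intro: gr0I)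
    then have "p dvd (p choose i)" "p dvd (p choose Suc i)"
      using assms(1) by (auto intro!: dvd_choose_prime)
    then have "p dvd (Suc p choose Suc i)"
      unfolding binomial_Suc_Suc by (rule dvd_add)
    then show ?thesis
      unfolding t_def by (intro dvd_mult2) (simp only: int_dvd_int_iff)
  qed (simp add: t_def)
  then have middle: "[(\<Sum>i<p. t (Suc i)) = 0] (mod int p)"
    by (auto simp: cong_0_iff intro!: dvd_sum)
  have first: "[t 0 = x^2] (mod int p)"
  proof -
    have "[x^p * x = x * x] (mod int p)"
      using fermat_little_int[OF assms(1)] by (rule cong_scalar_right)
    then show ?thesis by (simp add: t_def power2_eq_square mult.commute)
  qed
  have last: "t (Suc p) = (x^2 - 1) * (x^2 - 1)^((p - 1) div 2)"
  proof -
    have "Suc p div 2 = Suc ((p - 1) div 2)" using assms(2) by (auto elim: oddE)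
    then show ?thesis using assms(2) by (simp add: t_def)
  qed
  have "[t 0 + (\<Sum>i<p. t (Suc i)) + t (Suc p) = x^2 + 0 + t (Suc p)] (mod int p)"
    using first middle by (intro cong_add cong_refl)
  then show ?thesis
    unfolding sum last by simp
qed

lemma cheb_shift_period:
  assumes "[cheb Q x = 1] (mod m)" "[cheb (Suc Q) x = x] (mod m)"
  shows "[cheb (Q * t + j) x = cheb j x] (mod m)"
proof -
  have shift: "[cheb (Q + i) x = cheb i x] (mod m)" for i
  proof (induction i rule: induct_nat_012)
    case (ge2 i)
    then show ?case by (simp add: cong_diff cong_mult)
  qed (use assms in simp_all)
  show ?thesis
  proof (induction t)
    case (Suc t)
    then show ?case
      using shift[of "Q * t + j"] by (simp add: add.assoc cong_trans)
  qed simp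
qed

(* Q = p - 1 if x^2 - 1 is a non-zero square mod p, and Q = p + 1 otherwise. *)
lemma cheb_period_mod_prime:
  assumes p: "prime p" "odd p"
  obtains Q where "0 < Q" "Q dvd p^2 - 1" "[cheb Q x = 1] (mod int p)" "[cheb (Suc Q) x = x] (mod int p)"
proof -
  define D where "D = x^2 - 1"
  define \<epsilon> where "\<epsilon> = D ^ ((p - 1) div 2)"
  have p3: "3 \<le> p" using p prime_ge_2_nat[OF p(1)] by (cases "p = 2") auto
  have Tp: "[cheb p x = x] (mod int p)" by (rule cheb_prime_cong[OF p])
  have Tp1: "[cheb (Suc p) x = x^2 + D * \<epsilon>] (mod int p)"
    unfolding D_def \<epsilon>_def by (rule cheb_Suc_prime_cong[OF p])
  have euler: "[Legendre D (int p) = \<epsilon>] (mod int p)"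
    unfolding \<epsilon>_def using p(1) p3 by (intro euler_criterion) auto
  have pfac: "p^2 - 1 = (p - 1) * Suc p"
    by (simp add: power2_eq_square algebra_simps)
  have dvd: "p - 1 dvd p^2 - 1" "Suc p dvd p^2 - 1"
    unfolding pfac by (rule dvd_triv_left, rule dvd_triv_right)
  show ?thesis
  proof (cases "Legendre D (int p) = 1")
    case True
    then have "[x^2 + D * \<epsilon> = x^2 + D * 1] (mod int p)"
      using euler by (intro cong_add cong_mult cong_refl) (simp add: cong_sym)
    moreover have "x^2 + D * 1 = 2 * x * x - 1"
      unfolding D_def by (simp add: power2_eq_square)
    ultimately have "[cheb (Suc p) x = 2 * x * x - 1] (mod int p)"
      using cong_trans[OF Tp1] by simp
    then have "[2 * x * cheb p x - cheb (Suc p) x = 2 * x * x - (2 * x * x - 1)] (mod int p)"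
      using Tp by (intro cong_diff cong_mult cong_refl)
    moreover have "cheb (p - 1) x = 2 * x * cheb p x - cheb (Suc p) x"
      using p3 by (cases p rule: nat.exhaust; cases "p - 1") auto
    ultimately have "[cheb (p - 1) x = 1] (mod int p)" by simp
    moreover have "Suc (p - 1) = p" using p3 by simp
    ultimately show ?thesis
      using that[of "p - 1"] p3 dvd Tp by auto
  next
    case False
    have "[D * \<epsilon> = - D] (mod int p)"
    proof (cases "[D = 0] (mod int p)")
      case True
      then have "[D * \<epsilon> = 0] (mod int p)" "[- D = 0] (mod int p)"
        by (simp_all add: cong_0_iff)
      then show ?thesis by (metis cong_sym cong_trans)
    next
      case nonzero: False
      then have "Legendre D (int p) = -1" using False by (simp add: Legendre_def split: if_splits)
      then have "[D * \<epsilon> = D * (-1)] (mod int p)"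
        using euler by (intro cong_mult cong_refl) (simp add: cong_sym)
      then show ?thesis by simp
    qed
    then have "[x^2 + D * \<epsilon> = x^2 + - D] (mod int p)" by (intro cong_add cong_refl)
    moreover have "x^2 + - D = 1" unfolding D_def by simp
    ultimately have T1: "[cheb (Suc p) x = 1] (mod int p)"
      using cong_trans[OF Tp1] by simp
    have "[2 * x * cheb (Suc p) x - cheb p x = 2 * x * 1 - x] (mod int p)"
      using T1 Tp by (intro cong_diff cong_mult cong_refl)
    then have "[cheb (Suc (Suc p)) x = x] (mod int p)" by simp
    then show ?thesis
      using that[of "Suc p"] dvd T1 by auto
  qed
qed

lemma cheb_inj_mod_prime:
  assumes p: "prime p" "odd p" and cop: "coprime n (p^2 - 1)"
    and eq: "[cheb n x = cheb n y] (mod int p)"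
  shows "[x = y] (mod int p)"
proof -
  define P where "P = p^2 - 1"
  have "3 \<le> p" using p prime_ge_2_nat[OF p(1)] by (cases "p = 2") auto
  then have "3^2 \<le> p^2" by (rule power_mono) simp
  then have P: "1 < P" unfolding P_def by simp
  obtain m where "[n * m = 1] (mod P)"
    using cong_solve_coprime_nat cop P_def by fastforce
  then have "n * m mod P = 1" using P by (simp add: cong_def)
  then have nm: "n * m = P * (n * m div P) + 1"
    by (metis div_mult_mod_eq mult.commute)
  \<comment> \<open>Since n m = 1 mod every Q of \<open>cheb_period_mod_prime\<close>, T_m inverts T_n mod p.\<close>
  have inverse: "[cheb m (cheb n z) = z] (mod int p)" for z
  proof -
    obtain Q where Q: "Q dvd P" "[cheb Q z = 1] (mod int p)" "[cheb (Suc Q) z = z] (mod int p)"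
      using cheb_period_mod_prime[OF p] P_def by metis
    then obtain r where "P = Q * r" by blast
    then have "m * n = Q * (r * (n * m div P)) + 1"
      using nm by (simp add: mult.assoc mult.commute)
    then show ?thesis
      using cheb_shift_period[OF Q(2,3), of "r * (n * m div P)" 1] by (simp add: cheb_mult)
  qed
  have "[cheb m (cheb n x) = cheb m (cheb n y)] (mod int p)"
    using eq by (rule cheb_cong)
  then show ?thesis
    using inverse[of x] inverse[of y] by (metis cong_sym cong_trans)
qed

(* If p divides U_(n-1)(x), Pell's equation gives T_n(x) = +-1 = T_n(+-1) mod p, so x = +-1 and
   then U_(n-1)(x) = n mod p. *)
lemma cheb_deriv_not_dvd:
  assumes p: "prime p" "odd p" and cop: "coprime n (p^2 - 1)" and np: "\<not> p dvd n"
  shows "\<not> int p dvd cheb_deriv n x"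
proof
  assume "int p dvd cheb_deriv n x"
  have pint: "prime (int p)" using p(1) by simp
  have "even (p^2 - 1)" using p(2) by simp
  then have n: "odd n" using cop coprime_common_divisor[of n "p^2 - 1" 2] by auto
  have "\<not> int p dvd int n" using np by simp
  then have V: "int p dvd cheb2 n x"
    using \<open>int p dvd cheb_deriv n x\<close> prime_dvd_mult_iff[OF pint] unfolding cheb_deriv_def by blast
  have "(cheb n x - 1) * (cheb n x + 1) = (x^2 - 1) * cheb2 n x ^ 2"
    using cheb_pell[of n x] by (simp add: algebra_simps power2_eq_square)
  then have "int p dvd (cheb n x - 1) * (cheb n x + 1)"
    using V by (simp add: power2_eq_square)
  then have "int p dvd cheb n x - 1 \<or> int p dvd cheb n x - (-1)"
    using prime_dvd_mult_iff[OF pint] by simp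
  then obtain e where e: "e = 1 \<or> e = -1" "[cheb n x = e] (mod int p)"
    unfolding cong_iff_dvd_diff by blast
  have at_e: "cheb n e = e" "cheb2 n e = int n"
    using e(1) n by (auto simp: cheb_at_one cheb_at_minus_one cheb2_at_one cheb2_at_minus_one)
  then have "[x = e] (mod int p)"
    using cheb_inj_mod_prime[OF p cop] e(2) by simp
  then have "[cheb2 n x = int n] (mod int p)"
    using cheb2_cong at_e by metis
  then have "int p dvd int n" using V by (simp add: cong_dvd_iff)
  then show False using np by simp
qed

section \<open>Lifting fixed points to higher prime powers\<close>

lemma cheb_deriv_cong: "[x = y] (mod m) \<Longrightarrow> [cheb_deriv j x = cheb_deriv j y] (mod m)"
  unfolding cheb_deriv_def by (intro cong_mult cong_refl cheb2_cong)

lemma cheb_first_order: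
  fixes q :: int
  assumes "1 \<le> k"
  shows "q ^ Suc k dvd cheb N (x + q^k * t) - cheb N x - q^k * t * cheb_deriv N x"
proof -
  have "q ^ Suc k dvd (q^k * t)^2"
    using assms by (simp add: power_mult_distrib power2_eq_square le_imp_power_dvd dvd_mult2
        flip: power_add)
  then show ?thesis using cheb_taylor1 dvd_trans by blast
qed

(* The chain rule holds exactly: by the first-order Taylor expansions, every h \<noteq> 0 divides the
   difference of the two sides. *)
lemma cheb_deriv_mult: "cheb_deriv (a * b) x = cheb_deriv a (cheb b x) * cheb_deriv b x"
proof -
  define X where "X = cheb_deriv (a * b) x - cheb_deriv a (cheb b x) * cheb_deriv b x"
  have "h dvd X" if "h \<noteq> 0" for h
  proof -
    obtain r where r: "cheb b (x + h) - cheb b x - h * cheb_deriv b x = h^2 * r"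
      using cheb_taylor1[of h b x] by (elim dvdE)
    define u where "u = cheb_deriv b x + h * r"
    have b: "cheb b (x + h) = cheb b x + h * u"
      using r unfolding u_def by (simp add: algebra_simps power2_eq_square)
    have "h^2 dvd (h * u)^2" by (simp add: power_mult_distrib)
    then have "h^2 dvd cheb a (cheb b x + h * u) - cheb a (cheb b x) - h * u * cheb_deriv a (cheb b x)"
      using cheb_taylor1 dvd_trans by blast
    then have "h^2 dvd cheb (a * b) (x + h) - cheb (a * b) x - h * u * cheb_deriv a (cheb b x)"
      by (simp only: b[symmetric] cheb_mult)
    moreover have "h^2 dvd cheb (a * b) (x + h) - cheb (a * b) x - h * cheb_deriv (a * b) x"
      by (rule cheb_taylor1)
    ultimately have "h^2 dvd (cheb (a * b) (x + h) - cheb (a * b) x - h * u * cheb_deriv a (cheb b x))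
        - (cheb (a * b) (x + h) - cheb (a * b) x - h * cheb_deriv (a * b) x)"
      by (rule dvd_diff)
    also have "\<dots> = h * X - h^2 * (r * cheb_deriv a (cheb b x))"
      unfolding X_def u_def by (simp add: algebra_simps power2_eq_square)
    finally have "h^2 dvd h * X - h^2 * (r * cheb_deriv a (cheb b x)) + h^2 * (r * cheb_deriv a (cheb b x))"
      by (rule dvd_add) simp
    then have "h * h dvd h * X" by (simp add: power2_eq_square)
    then show ?thesis using that by simp
  qed
  have "X = 0"
  proof (rule ccontr)
    assume "X \<noteq> 0"
    have "\<bar>X\<bar> + 1 dvd X" by (rule \<open>\<And>h. h \<noteq> 0 \<Longrightarrow> h dvd X\<close>) simp
    then have "\<bar>X\<bar> + 1 \<le> \<bar>X\<bar>" using \<open>X \<noteq> 0\<close> by (intro zdvd_imp_le) simp_all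
    then show False by simp
  qed
  then show ?thesis unfolding X_def by simp
qed

lemma cheb_power_fixed_cong:
  assumes "[cheb N x = x] (mod m)"
  shows "[cheb (N^j) x = x] (mod m)"
proof (induction j)
  case (Suc j)
  have "[cheb N (cheb (N^j) x) = cheb N x] (mod m)"
    using Suc by (rule cheb_cong)
  then show ?case
    using assms by (simp add: cheb_mult mult.commute cong_trans)
qed simp

lemma cheb_deriv_power_cong:
  assumes "[cheb N x = x] (mod m)"
  shows "[cheb_deriv (N^j) x = cheb_deriv N x ^ j] (mod m)"
proof (induction j)
  case (Suc j)
  have "[cheb_deriv N (cheb (N^j) x) = cheb_deriv N x] (mod m)"
    using cheb_power_fixed_cong[OF assms] by (rule cheb_deriv_cong)
  then show ?case
    using Suc by (simp add: cheb_deriv_mult cong_mult)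
qed (simp add: cheb_deriv_def)

lemma cheb_power_first_order:
  fixes q :: int
  assumes k: "1 \<le> k" and c: "cheb N x = x + q^k * c"
  shows "\<exists>s. cheb (N^m) x = x + q^k * s \<and> [s = c * (\<Sum>i<m. cheb_deriv N x ^ i)] (mod q)"
proof (induction m)
  case (Suc m)
  define a where "a = cheb_deriv N x"
  obtain s where s: "cheb (N^m) x = x + q^k * s" "[s = c * (\<Sum>i<m. a ^ i)] (mod q)"
    using Suc a_def by blast
  obtain r where r: "cheb N (x + q^k * s) - cheb N x - q^k * s * a = q ^ Suc k * r"
    using cheb_first_order[OF k, of q N x s] unfolding a_def by (elim dvdE)
  have "cheb (N ^ Suc m) x = cheb N (cheb (N^m) x)"
    by (simp add: cheb_mult mult.commute)
  also have "\<dots> = x + q^k * (c + a * s + q * r)"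
    using r c s(1) by (simp add: algebra_simps)
  finally have "cheb (N ^ Suc m) x = x + q^k * (c + a * s + q * r)" .
  moreover have "[c + a * s + q * r = c + a * (c * (\<Sum>i<m. a ^ i)) + 0] (mod q)"
    using s(2) by (intro cong_add cong_mult cong_refl) (simp_all add: cong_iff_dvd_diff)
  moreover have "c + a * (c * (\<Sum>i<m. a ^ i)) = c * (\<Sum>i<Suc m. a ^ i)"
    unfolding sum.lessThan_Suc_shift by (simp add: sum_distrib_left algebra_simps)
  ultimately show ?case
    unfolding a_def by auto
qed (intro exI[of _ 0], simp)

(* For k = 1 the quadratic Taylor term does not vanish mod q^(k+2), whence the second order. *)
lemma cheb_power_second_order:
  fixes q c \<delta> :: int
  assumes k: "1 \<le> k" and c: "cheb N x = x + q^k * c" and a: "cheb_deriv N x = 1 + q * \<delta>"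
  defines "e \<equiv> cheb_deriv2 N x"
  shows "\<exists>w. cheb (N^j) x = x + q^k * w \<and>
           [w = int j * c + q * (\<delta> * c * (\<Sum>i<j. int i) + q^(k - 1) * e * c^2 * (\<Sum>i<j. int i ^ 2))]
             (mod q^2)"
proof -
  obtain k0 where k0: "k = Suc k0" using k by (cases k) auto
  define F where "F j = \<delta> * c * (\<Sum>i<j. int i) + q^k0 * e * c^2 * (\<Sum>i<j. int i ^ 2)" for j
  define E where "E j = int j * c + q * F j" for j
  have "\<exists>w. cheb (N^j) x = x + q^k * w \<and> [w = E j] (mod q^2)"
  proof (induction j)
    case 0
    then show ?case by (intro exI[of _ 0]) (simp add: E_def F_def)
  next
    case (Suc j)
    then obtain w where w: "cheb (N^j) x = x + q^k * w" "[w = E j] (mod q^2)"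
      by blast
    obtain Z where "w - E j = q^2 * Z"
      using w(2) unfolding cong_iff_dvd_diff by (elim dvdE)
    then have Z: "w = E j + q^2 * Z" by simp
    define u where "u = q^k * w"
    have "u^3 = q^(3 * k) * w^3"
      unfolding u_def by (metis power_mult power_mult_distrib mult.commute)
    also have "\<dots> = q^(k + 2) * (q^(2 * k0) * w^3)"
    proof -
      have "3 * k = (k + 2) + 2 * k0" using k0 by simp
      then show ?thesis by (simp only: power_add mult.assoc)
    qed
    finally have "q^(k + 2) dvd u^3" by simp
    then obtain R where R: "cheb N (x + u) - cheb N x - u * cheb_deriv N x - u^2 * e = q^(k + 2) * R"
      using cheb_taylor2[of u N x] dvd_trans unfolding e_def by (metis dvdE)
    define w' where "w' = c + w * (1 + q * \<delta>) + q^k * e * w^2 + q^2 * R"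
    have "cheb (N ^ Suc j) x = cheb N (cheb (N^j) x)"
      by (simp add: cheb_mult)
    also have "\<dots> = cheb N (x + u)"
      using w(1) u_def by simp
    also have "\<dots> = x + q^k * w'"
      using R c a unfolding w'_def u_def by (simp add: algebra_simps power2_eq_square power_add)
    finally have step: "cheb (N ^ Suc j) x = x + q^k * w'" .
    have "F (Suc j) = F j + \<delta> * c * int j + q^k0 * e * c^2 * int j ^ 2"
      unfolding F_def by (simp add: algebra_simps)
    then have "w' - E (Suc j)
        = q^2 * (Z + \<delta> * (F j + q * Z) + q^k0 * e * (F j + q * Z) * (E j + int j * c + q^2 * Z) + R)"
      unfolding w'_def Z E_def k0 by (simp add: algebra_simps power2_eq_square)
    then have "[w' = E (Suc j)] (mod q^2)"
      unfolding cong_iff_dvd_diff by simp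
    then show ?case using step by blast
  qed
  then show ?thesis unfolding E_def F_def k0 by simp
qed

lemma dvd_sum_of_nats: "odd m \<Longrightarrow> int m dvd (\<Sum>i<m. int i)"
proof -
  assume "odd m"
  have "2 * (\<Sum>i<m. int i) = int m * (int m - 1)"
    by (induction m) (auto simp: algebra_simps)
  then have "int m dvd 2 * (\<Sum>i<m. int i)" by simp
  moreover have "coprime (int m) 2" using \<open>odd m\<close> by simp
  ultimately show ?thesis by (simp add: coprime_dvd_mult_right_iff)
qed

lemma dvd_sum_of_squares: "coprime m 6 \<Longrightarrow> int m dvd (\<Sum>i<m. int i ^ 2)"
proof -
  assume "coprime m 6"
  have "6 * (\<Sum>i<m. int i ^ 2) = int m * (int m - 1) * (2 * int m - 1)"
    by (induction m) (auto simp: algebra_simps power2_eq_square)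
  then have "int m dvd 6 * (\<Sum>i<m. int i ^ 2)" by (simp add: mult.assoc)
  moreover have "coprime (int m) 6" using \<open>coprime m 6\<close> by (metis coprime_int_iff of_nat_numeral)
  ultimately show ?thesis by (simp add: coprime_dvd_mult_right_iff)
qed

(* This is where p > 3 enters: coprime q 6 makes q divide the sums of i and of i^2 over i < q. *)
lemma cheb_power_not_cong:
  fixes q :: nat
  assumes q: "coprime q 6" and k: "1 \<le> k" and c: "cheb N x = x + int q ^ k * c"
    and nc: "\<not> int q dvd c" and a: "[cheb_deriv N x = 1] (mod int q)"
  shows "\<not> [cheb (N ^ q) x = x] (mod int q ^ (k + 2))"
proof
  assume cong: "[cheb (N ^ q) x = x] (mod int q ^ (k + 2))"
  have "q \<noteq> 0" using q by (rule_tac notI) simp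
  have "odd q" using q coprime_common_divisor[of q 6 2] by auto
  obtain \<delta> where "cheb_deriv N x - 1 = int q * \<delta>"
    using a unfolding cong_iff_dvd_diff by (elim dvdE)
  then have "cheb_deriv N x = 1 + int q * \<delta>" by simp
  define X where
    "X = \<delta> * c * (\<Sum>i<q. int i) + int q ^ (k - 1) * cheb_deriv2 N x * c^2 * (\<Sum>i<q. int i ^ 2)"
  obtain w where w: "cheb (N ^ q) x = x + int q ^ k * w" "[w = int q * c + int q * X] (mod (int q)^2)"
    using cheb_power_second_order[OF k c \<open>cheb_deriv N x = 1 + int q * \<delta>\<close>, of q]
    unfolding X_def by blast
  have "int q dvd X"
    unfolding X_def using dvd_sum_of_nats[OF \<open>odd q\<close>] dvd_sum_of_squares[OF q]
    by (intro dvd_add dvd_mult)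
  then have "[int q * c + int q * X = int q * c + 0] (mod (int q)^2)"
    by (intro cong_add cong_refl) (simp add: cong_0_iff power2_eq_square mult_dvd_mono)
  then have wc: "[w = int q * c] (mod (int q)^2)"
    using cong_trans[OF w(2)] by simp
  have "(int q)^2 dvd w"
    using cong w(1) \<open>q \<noteq> 0\<close> by (simp add: cong_iff_dvd_diff power_add power2_eq_square)
  then have "int q * int q dvd int q * c"
    using wc by (simp add: cong_dvd_iff power2_eq_square)
  then show False using nc \<open>q \<noteq> 0\<close> by simp
qed

lemma geometric_sum_cong_one:
  fixes a q :: int
  assumes "[a = 1] (mod q)"
  shows "[(\<Sum>i<m. a ^ i) = int m] (mod q)"
proof -
  have "[(\<Sum>i<m. a ^ i) = (\<Sum>i<m. 1 ^ i)] (mod q)"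
    using assms by (intro cong_sum cong_pow)
  then show ?thesis by simp
qed

lemma prime_dvd_geometric_sum:
  assumes p: "prime p" and a: "\<not> [a = 1] (mod int p)" "\<not> int p dvd a"
  shows "int p dvd (\<Sum>i<p - 1. a ^ i)"
proof -
  have pint: "prime (int p)" using p by simp
  have "[a ^ (p - 1) * a = 1 * a] (mod int p)"
    using fermat_little_int[OF p, of a] p by (simp add: power_Suc2[symmetric] prime_gt_0_nat)
  then have "[a ^ (p - 1) = 1] (mod int p)"
    using a(2) pint by (metis cong_mult_rcancel prime_imp_coprime coprime_commute)
  then have "int p dvd (a - 1) * (\<Sum>i<p - 1. a ^ i)"
    by (simp add: power_diff_1_eq[symmetric] cong_iff_dvd_diff)
  moreover have "\<not> int p dvd a - 1" using a(1) by (simp add: cong_iff_dvd_diff)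
  ultimately show ?thesis using pint prime_dvd_mult_iff by blast
qed

lemma power_Suc_dvd_mult_power_iff:
  fixes q :: int
  assumes "q \<noteq> 0"
  shows "q ^ Suc k dvd q ^ k * s \<longleftrightarrow> q dvd s"
  using assms by (simp add: power_Suc2 mult.commute[of "q ^ k"])

section \<open>Periods of T_n modulo powers of p\<close>

lemma card_mod_preimage:
  fixes m :: int and D :: "int set"
  assumes m: "0 < m" and D: "D \<subseteq> {0..<m}"
  shows "card {y \<in> {0..<m * int d}. y mod m \<in> D} = d * card D"
proof -
  define f where "f = (\<lambda>(z, j). z + m * j)"
  have "{y \<in> {0..<m * int d}. y mod m \<in> D} = f ` (D \<times> {0..<int d})"
  proof (intro equalityI subsetI)
    fix y assume y: "y \<in> {y \<in> {0..<m * int d}. y mod m \<in> D}"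
    have "y div m < int d"
    proof (rule ccontr)
      assume "\<not> y div m < int d"
      then have "m * int d \<le> m * (y div m)" using m by (intro mult_left_mono) auto
      also have "\<dots> \<le> y" using m mult_div_mod_eq[of m y] pos_mod_sign[of m y] by linarith
      finally show False using y by simp
    qed
    then have "y div m \<in> {0..<int d}"
      using m y by (simp add: pos_imp_zdiv_nonneg_iff)
    moreover have "y = f (y mod m, y div m)"
      unfolding f_def by simp
    ultimately show "y \<in> f ` (D \<times> {0..<int d})"
      using y by blast
  next
    fix y assume "y \<in> f ` (D \<times> {0..<int d})"
    then obtain z j where zj: "z \<in> D" "0 \<le> j" "j < int d" "y = z + m * j"
      unfolding f_def by auto
    then have z: "0 \<le> z" "z < m" using D by auto
    have "z + m * j < m * (j + 1)" using z by (simp add: algebra_simps)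
    also have "\<dots> \<le> m * int d" using zj(3) m by (intro mult_left_mono) auto
    finally have "y < m * int d" using zj(4) by simp
    moreover have "y mod m = z" using z zj(4) by simp
    ultimately show "y \<in> {y \<in> {0..<m * int d}. y mod m \<in> D}"
      using z zj m by auto
  qed
  moreover have "inj_on f (D \<times> {0..<int d})"
  proof (rule inj_onI, clarify)
    fix z j z' j' assume "z \<in> D" "z' \<in> D" "f (z, j) = f (z', j')"
    then have eq: "z + m * j = z' + m * j'" and z: "0 \<le> z" "z < m" "0 \<le> z'" "z' < m"
      using D unfolding f_def by auto
    have "z = (z + m * j) mod m" using z by simp
    also have "\<dots> = z'" using eq z by simp
    finally show "z = z' \<and> j = j'" using eq m by simp
  qed
  ultimately show ?thesis
    by (simp add: card_image card_cartesian_product)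
qed

locale cheb_permutation =
  fixes p n :: nat
  assumes prime: "prime p" and p_gt_3: "3 < p"
    and not_dvd: "\<not> p dvd n" and coprime: "coprime n (p^2 - 1)"
begin

lemma odd_p: "odd p"
  using prime p_gt_3 by (intro prime_odd_nat) auto

lemma prime_int: "prime (int p)"
  using prime by simp

lemma p_nonzero: "p \<noteq> 0"
  using prime by simp

lemma coprime_6: "coprime p 6"
proof (rule prime_imp_coprime[OF prime])
  show "\<not> p dvd 6"
  proof
    assume "p dvd 6"
    then have "p dvd 2 \<or> p dvd 3"
      using prime prime_dvd_mult_iff[of p 2 3] by simp
    then show False using p_gt_3 by (auto dest: dvd_imp_le)
  qed
qed

lemma cheb_inj_mod_prime_power:
  "[cheb n x = cheb n y] (mod int p ^ k) \<Longrightarrow> [x = y] (mod int p ^ k)"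
proof (induction k arbitrary: x y)
  case (Suc k)
  show ?case
  proof (cases "k = 0")
    case True
    then show ?thesis
      using Suc.prems cheb_inj_mod_prime[OF prime odd_p coprime] by simp
  next
    case False
    have "[cheb n x = cheb n y] (mod int p ^ k)"
      using Suc.prems by (rule cong_dvd_modulus) (simp add: le_imp_power_dvd)
    then have "int p ^ k dvd y - x"
      using Suc.IH by (simp add: cong_iff_dvd_diff dvd_diff_commute)
    then obtain t where "y - x = int p ^ k * t"
      by (elim dvdE)
    then have y: "y = x + int p ^ k * t" by simp
    have d1: "int p ^ Suc k dvd cheb n y - cheb n x"
      using Suc.prems by (simp add: cong_iff_dvd_diff dvd_diff_commute)
    \<comment> \<open>Hensel: T_n(x + p^k t) = T_n(x) + p^k t T_n'(x) mod p^(k+1), and p does not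
      divide T_n'(x).\<close>
    have d2: "int p ^ Suc k dvd cheb n y - cheb n x - int p ^ k * t * cheb_deriv n x"
      using cheb_first_order[of k "int p" n x t] False y by simp
    have "int p ^ Suc k dvd (cheb n y - cheb n x) - (cheb n y - cheb n x - int p ^ k * t * cheb_deriv n x)"
      using d1 d2 by (rule dvd_diff)
    then have "int p ^ k * int p dvd int p ^ k * (t * cheb_deriv n x)"
      by (simp add: mult.commute mult.left_commute)
    then have "int p dvd t * cheb_deriv n x"
      using prime by (subst (asm) dvd_mult_cancel_left) (auto simp: prime_gt_0_nat)
    then have "int p dvd t"
      using cheb_deriv_not_dvd[OF prime odd_p coprime not_dvd] prime_int prime_dvd_mult_iff by blast
    then show ?thesis
      unfolding y cong_iff_dvd_diff by (simp add: mult.commute)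
  qed
qed simp

lemma cheb_pow_inj_mod_prime_power:
  "[cheb (n^i) x = cheb (n^i) y] (mod int p ^ k) \<Longrightarrow> [x = y] (mod int p ^ k)"
proof (induction i arbitrary: x y)
  case (Suc i)
  then have "[cheb n (cheb (n^i) x) = cheb n (cheb (n^i) y)] (mod int p ^ k)"
    by (simp add: cheb_mult)
  then show ?case
    by (rule Suc.IH[OF cheb_inj_mod_prime_power])
qed simp

definition period :: "nat \<Rightarrow> int \<Rightarrow> nat" where
  "period k x = (LEAST L. 0 < L \<and> [cheb (n^L) x = x] (mod int p ^ k))"

lemma period_exists: "\<exists>L>0. [cheb (n^L) x = x] (mod int p ^ k)"
proof -
  define f where "f i = cheb (n^i) x mod int p ^ k" for i
  have "f ` {..p^k} \<subseteq> {0..<int (p^k)}"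
    unfolding f_def using prime by (auto simp: prime_gt_0_nat)
  then have "card (f ` {..p^k}) \<le> card {0..<int (p^k)}"
    by (intro card_mono) simp_all
  then have "card (f ` {..p^k}) < card {..p^k}" by (simp add: nat_power_eq)
  then have "\<not> inj_on f {..p^k}" by (rule pigeonhole)
  then obtain i j where "i \<noteq> j" "f i = f j"
    unfolding inj_on_def by blast
  then obtain i j where ij: "i < j" "f i = f j"
    by (metis linorder_neqE_nat)
  then have "[cheb (n^i) (cheb (n^(j - i)) x) = cheb (n^i) x] (mod int p ^ k)"
    unfolding f_def cong_def by (simp add: cheb_mult flip: power_add)
  then have "[cheb (n^(j - i)) x = x] (mod int p ^ k)"
    by (rule cheb_pow_inj_mod_prime_power)
  then show ?thesis using ij(1) by (intro exI[of _ "j - i"]) auto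
qed

lemma period_pos: "0 < period k x"
  and cheb_period_cong: "[cheb (n ^ period k x) x = x] (mod int p ^ k)"
  using LeastI_ex[OF period_exists] unfolding period_def by auto

lemma period_dvd_iff: "[cheb (n^M) x = x] (mod int p ^ k) \<longleftrightarrow> period k x dvd M"
proof
  define L where "L = period k x"
  assume M: "[cheb (n^M) x = x] (mod int p ^ k)"
  have "[cheb (n ^ (M mod L)) (cheb ((n^L) ^ (M div L)) x) = cheb (n ^ (M mod L)) x] (mod int p ^ k)"
    unfolding L_def by (intro cheb_cong cheb_power_fixed_cong cheb_period_cong)
  moreover have "cheb (n ^ (M mod L)) (cheb ((n^L) ^ (M div L)) x) = cheb (n^M) x"
    by (simp add: cheb_mult mult.commute flip: power_add power_mult)
  ultimately have "[cheb (n ^ (M mod L)) x = x] (mod int p ^ k)"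
    using M by (metis cong_sym cong_trans)
  moreover have "M mod L < L" using period_pos L_def by simp
  ultimately have "M mod L = 0"
    using not_less_Least[of "M mod L" "\<lambda>L. 0 < L \<and> [cheb (n^L) x = x] (mod int p ^ k)"]
    unfolding L_def period_def by auto
  then show "period k x dvd M" unfolding L_def by auto
next
  assume "period k x dvd M"
  then obtain t where "M = period k x * t" by blast
  then show "[cheb (n^M) x = x] (mod int p ^ k)"
    using cheb_power_fixed_cong[OF cheb_period_cong] by (simp add: power_mult)
qed

lemma period_cong: "[x = y] (mod int p ^ k) \<Longrightarrow> period k x = period k y"
proof -
  assume xy: "[x = y] (mod int p ^ k)"
  have "[cheb (n^L) x = x] (mod int p ^ k) \<longleftrightarrow> [cheb (n^L) y = y] (mod int p ^ k)" for L
    using cheb_cong[OF xy, of "n^L"] xy by (simp add: cong_def)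
  then show ?thesis unfolding period_def by simp
qed

lemma period_dvd_period_Suc: "period k x dvd period (Suc k) x"
proof -
  have "[cheb (n ^ period (Suc k) x) x = x] (mod int p ^ k)"
    using cheb_period_cong by (rule cong_dvd_modulus) (simp add: le_imp_power_dvd)
  then show ?thesis by (simp add: period_dvd_iff)
qed

lemma cheb_map_iterate:
  "x \<in> vertices (int p) k \<Longrightarrow> (cheb_map (int p) n k ^^ i) x = cheb (n^i) x mod int p ^ k"
proof (induction i)
  case (Suc i)
  have "[cheb n (cheb (n^i) x mod int p ^ k) = cheb n (cheb (n^i) x)] (mod int p ^ k)"
    by (rule cheb_cong) (simp add: cong_def)
  then show ?case
    using Suc by (simp add: cheb_map_def cong_def cheb_mult)
qed (simp add: vertices_def)

lemma cycle_of_eq_range: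
  "x \<in> vertices (int p) k \<Longrightarrow> cycle_of (int p) n k x = range (\<lambda>i. cheb (n^i) x mod int p ^ k)"
  unfolding cycle_of_def using cheb_map_iterate by auto

lemma cycle_of_subset: "x \<in> vertices (int p) k \<Longrightarrow> cycle_of (int p) n k x \<subseteq> vertices (int p) k"
  using cycle_of_eq_range prime by (auto simp: vertices_def prime_gt_0_nat)

lemma cheb_pow_cong_iff_period_dvd:
  assumes "i \<le> j"
  shows "[cheb (n^j) x = cheb (n^i) x] (mod int p ^ k) \<longleftrightarrow> period k x dvd j - i"
proof -
  have "cheb (n^j) x = cheb (n^i) (cheb (n^(j - i)) x)"
    using assms by (simp add: cheb_mult flip: power_add)
  then have "[cheb (n^j) x = cheb (n^i) x] (mod int p ^ k) \<longleftrightarrow> [cheb (n^(j - i)) x = x] (mod int p ^ k)"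
    using cheb_pow_inj_mod_prime_power[of i "cheb (n^(j - i)) x" x] cheb_cong[of "cheb (n^(j - i)) x" x _ "n^i"]
    by auto
  then show ?thesis by (simp add: period_dvd_iff)
qed

lemma card_cycle_of: "x \<in> vertices (int p) k \<Longrightarrow> card (cycle_of (int p) n k x) = period k x"
proof -
  assume x: "x \<in> vertices (int p) k"
  define L where "L = period k x"
  define f where "f i = cheb (n^i) x mod int p ^ k" for i
  have f_eq_iff: "f j = f i \<longleftrightarrow> L dvd j - i" if "i \<le> j" for i j
    using cheb_pow_cong_iff_period_dvd[OF that, of x k] unfolding f_def L_def cong_def .
  have "f i \<in> f ` {..<L}" for i
  proof -
    have "f i = f (i mod L)"
      using f_eq_iff[of "i mod L" i] by (simp add: minus_mod_eq_mult_div)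
    moreover have "i mod L < L" using period_pos L_def by simp
    ultimately show ?thesis by simp
  qed
  then have "range f = f ` {..<L}" by auto
  moreover have "inj_on f {..<L}"
  proof (rule inj_onI)
    have dvd: "L dvd j - i" if "f i = f j" for i j
    proof (cases "i \<le> j")
      case True
      then show ?thesis using f_eq_iff[OF True] that by metis
    qed simp
    fix i j assume ij: "i \<in> {..<L}" "j \<in> {..<L}" "f i = f j"
    have "j - i < L" "i - j < L" using ij(1,2) by auto
    then have "j - i = 0" "i - j = 0"
      using dvd[OF ij(3)] dvd[OF ij(3)[symmetric]] by (metis nat_dvd_not_less neq0_conv)+
    then show "i = j" by simp
  qed
  ultimately have "card (range f) = L"
    by (simp add: card_image)
  then show ?thesis
    using cycle_of_eq_range[OF x] unfolding f_def L_def by simp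
qed

lemma period_one_le: "period 1 x \<le> p"
proof -
  define y where "y = x mod int p"
  have "0 < int p" using prime by (simp add: prime_gt_0_nat)
  then have y: "y \<in> vertices (int p) 1" unfolding y_def vertices_def by simp
  have "period 1 x = period 1 y" unfolding y_def by (intro period_cong) (simp add: cong_def)
  also have "\<dots> = card (cycle_of (int p) n 1 y)" by (rule card_cycle_of[OF y, symmetric])
  also have "\<dots> \<le> card (vertices (int p) 1)"
    using cycle_of_subset[OF y] by (intro card_mono) (simp_all add: vertices_def)
  also have "\<dots> = p" by (simp add: vertices_def)
  finally show ?thesis .
qed

(* With L = period k x, c = lift_coeff k x and a = multiplier k x, the L-th iterate maps x + p^k t
   to x + p^k (c + a t) mod p^(k+1). A good point is one where this is a non-trivial translation. *)
definition lift_coeff :: "nat \<Rightarrow> int \<Rightarrow> int" where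
  "lift_coeff k x = (cheb (n ^ period k x) x - x) div int p ^ k"

definition multiplier :: "nat \<Rightarrow> int \<Rightarrow> int" where
  "multiplier k x = cheb_deriv (n ^ period k x) x"

definition good :: "nat \<Rightarrow> int \<Rightarrow> bool" where
  "good k x \<longleftrightarrow> [multiplier k x = 1] (mod int p) \<and> \<not> int p dvd lift_coeff k x"

lemma cheb_period_eq: "cheb (n ^ period k x) x = x + int p ^ k * lift_coeff k x"
proof -
  have "int p ^ k dvd cheb (n ^ period k x) x - x"
    using cheb_period_cong by (simp add: cong_iff_dvd_diff)
  then show ?thesis unfolding lift_coeff_def by simp
qed

lemma cheb_period_cong_Suc_iff:
  "[cheb (n ^ period k x) x = x] (mod int p ^ Suc k) \<longleftrightarrow> int p dvd lift_coeff k x"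
  by (subst cheb_period_eq) (simp add: cong_iff_dvd_diff power_Suc_dvd_mult_power_iff p_nonzero)

lemma cheb_period_cong_prime: "1 \<le> k \<Longrightarrow> [cheb (n ^ period k x) x = x] (mod int p)"
  using cheb_period_cong by (rule cong_dvd_modulus) (simp add: dvd_power)

lemma cheb_deriv_pow_not_dvd: "\<not> int p dvd cheb_deriv (n^L) x"
proof (induction L arbitrary: x)
  case (Suc L)
  then show ?case
    using cheb_deriv_not_dvd[OF prime odd_p coprime not_dvd] prime_int
    by (simp add: cheb_deriv_mult prime_dvd_mult_iff)
qed (use p_gt_3 in \<open>simp add: cheb_deriv_def\<close>)

lemma period_mult_cong_Suc_iff:
  assumes "1 \<le> k"
  shows "[cheb (n ^ (period k x * m)) x = x] (mod int p ^ Suc k) \<longleftrightarrow>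
           int p dvd lift_coeff k x * (\<Sum>i<m. multiplier k x ^ i)"
proof -
  obtain s where s: "cheb ((n ^ period k x) ^ m) x = x + int p ^ k * s"
    "[s = lift_coeff k x * (\<Sum>i<m. multiplier k x ^ i)] (mod int p)"
    using cheb_power_first_order[OF assms cheb_period_eq] unfolding multiplier_def by blast
  have "[cheb (n ^ (period k x * m)) x = x] (mod int p ^ Suc k) \<longleftrightarrow> int p ^ Suc k dvd int p ^ k * s"
    using s(1) by (simp add: power_mult cong_iff_dvd_diff)
  also have "\<dots> \<longleftrightarrow> int p dvd s"
    using p_nonzero by (intro power_Suc_dvd_mult_power_iff) simp
  also have "\<dots> \<longleftrightarrow> int p dvd lift_coeff k x * (\<Sum>i<m. multiplier k x ^ i)"
    using s(2) by (rule cong_dvd_iff)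
  finally show ?thesis .
qed

lemma period_Suc_le:
  assumes "1 \<le> k"
  shows "period (Suc k) x \<le> p * period k x"
proof -
  define a where "a = multiplier k x"
  \<comment> \<open>By Fermat, the geometric sum of a vanishes mod p after p terms if a = 1 and after
    p - 1 terms otherwise.\<close>
  obtain m where m: "0 < m" "m \<le> p" "int p dvd (\<Sum>i<m. a ^ i)"
  proof (cases "[a = 1] (mod int p)")
    case True
    then have "int p dvd (\<Sum>i<p. a ^ i)"
      using geometric_sum_cong_one[of a "int p" p] by (simp add: cong_dvd_iff)
    then show ?thesis using that[of p] p_gt_3 by simp
  next
    case False
    then have "int p dvd (\<Sum>i<p - 1. a ^ i)"
      using prime_dvd_geometric_sum[OF prime] cheb_deriv_pow_not_dvd
      unfolding a_def multiplier_def by blast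
    then show ?thesis using that[of "p - 1"] p_gt_3 by simp
  qed
  then have "period (Suc k) x dvd period k x * m"
    using period_mult_cong_Suc_iff[OF assms] period_dvd_iff unfolding a_def by (metis dvd_mult)
  then have "period (Suc k) x \<le> period k x * m"
    using m(1) period_pos by (intro dvd_imp_le) auto
  also have "\<dots> \<le> p * period k x"
    using m(2) by (simp add: mult.commute)
  finally show ?thesis .
qed

lemma good_period_Suc:
  assumes k: "1 \<le> k" and g: "good k x"
  shows "period (Suc k) x = p * period k x" and "good (Suc k) x"
proof -
  define L where "L = period k x"
  define a where "a = multiplier k x"
  define c where "c = lift_coeff k x"
  have a1: "[a = 1] (mod int p)" and nc: "\<not> int p dvd c"
    using g unfolding good_def a_def c_def by auto
  have lift_iff: "[cheb (n ^ (L * m)) x = x] (mod int p ^ Suc k) \<longleftrightarrow> int p dvd int m" for m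
  proof -
    have "[c * (\<Sum>i<m. a ^ i) = c * int m] (mod int p)"
      using geometric_sum_cong_one[OF a1] by (rule cong_scalar_left)
    then have "int p dvd c * (\<Sum>i<m. a ^ i) \<longleftrightarrow> int p dvd c * int m"
      by (rule cong_dvd_iff)
    also have "\<dots> \<longleftrightarrow> int p dvd int m"
      using nc prime_int prime_dvd_mult_iff by blast
    finally show ?thesis
      using period_mult_cong_Suc_iff[OF k] unfolding L_def a_def c_def by simp
  qed
  obtain m where m: "period (Suc k) x = L * m"
    using period_dvd_period_Suc unfolding L_def by blast
  have "p dvd m"
    using lift_iff[of m] cheb_period_cong[of "Suc k" x] m by simp
  moreover have "m dvd p"
  proof -
    have "period (Suc k) x dvd L * p"
      unfolding period_dvd_iff[symmetric] using lift_iff[of p] by simp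
    then show ?thesis using m period_pos[of k x] L_def by simp
  qed
  ultimately have "m = p" by (rule dvd_antisym[symmetric])
  then show period: "period (Suc k) x = p * period k x"
    using m L_def by simp
  have pow: "n ^ period (Suc k) x = (n ^ L) ^ p"
    unfolding period L_def by (metis mult.commute power_mult)
  then have "[multiplier (Suc k) x = a ^ p] (mod int p)"
    using cheb_deriv_power_cong[OF cheb_period_cong_prime[OF k, of x], of p]
    unfolding multiplier_def a_def L_def by simp
  also have "[a ^ p = 1 ^ p] (mod int p)"
    using a1 by (rule cong_pow)
  finally have "[multiplier (Suc k) x = 1] (mod int p)"
    by simp
  moreover have "\<not> [cheb ((n ^ L) ^ p) x = x] (mod int p ^ (k + 2))"
    using cheb_power_not_cong[OF coprime_6 k cheb_period_eq[of k x] nc[unfolded c_def]] a1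
    unfolding L_def a_def c_def multiplier_def by blast
  then have "\<not> int p dvd lift_coeff (Suc k) x"
    using cheb_period_cong_Suc_iff[of "Suc k" x] unfolding pow by simp
  ultimately show "good (Suc k) x" unfolding good_def by blast
qed

lemma period_Suc_eq_if_dvd_lift_coeff:
  assumes "int p dvd lift_coeff k x"
  shows "period (Suc k) x = period k x"
proof -
  have "[cheb (n ^ period k x) x = x] (mod int p ^ Suc k)"
    using assms cheb_period_cong_Suc_iff by blast
  then have "period (Suc k) x dvd period k x" by (simp only: period_dvd_iff)
  then show ?thesis using period_dvd_period_Suc by (simp add: dvd_antisym)
qed

lemma period_Suc_if_multiplier_not_one:
  assumes k: "1 \<le> k" and a1: "\<not> [multiplier k x = 1] (mod int p)"
  obtains m where "0 < m" "m < p" "period (Suc k) x = period k x * m"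
    "m = 1 \<or> [multiplier (Suc k) x = 1] (mod int p)"
proof -
  define L where "L = period k x"
  define a where "a = multiplier k x"
  define c where "c = lift_coeff k x"
  have lift_iff: "[cheb (n ^ (L * m)) x = x] (mod int p ^ Suc k) \<longleftrightarrow> int p dvd c * (\<Sum>i<m. a ^ i)"
    for m
    using period_mult_cong_Suc_iff[OF k] unfolding L_def a_def c_def by simp
  obtain m where m: "period (Suc k) x = L * m"
    using period_dvd_period_Suc unfolding L_def by blast
  have L: "0 < L" using period_pos L_def by simp
  have "int p dvd (\<Sum>i<p - 1. a ^ i)"
    using prime_dvd_geometric_sum[OF prime] a1 cheb_deriv_pow_not_dvd
    unfolding a_def multiplier_def by blast
  then have "period (Suc k) x dvd L * (p - 1)"
    unfolding period_dvd_iff[symmetric] using lift_iff[of "p - 1"] by simp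
  then have "m dvd p - 1" using m L by simp
  then have m_lt: "m < p" using p_gt_3 by (auto dest: dvd_imp_le)
  have m_pos: "0 < m" using m period_pos[of "Suc k" x] by (cases m) auto
  have m_eq: "period (Suc k) x = period k x * m" using m L_def by simp
  have m_disj: "m = 1 \<or> [multiplier (Suc k) x = 1] (mod int p)"
  proof (cases "m = 1")
    case False
    have "int p dvd c * (\<Sum>i<m. a ^ i)"
      using lift_iff[of m] cheb_period_cong[of "Suc k" x] m by simp
    moreover have "\<not> int p dvd c"
    proof
      assume "int p dvd c"
      then have "period (Suc k) x dvd L * 1"
        unfolding period_dvd_iff[symmetric] using lift_iff[of 1] by simp
      then show False using m L False by simp
    qed
    ultimately have "int p dvd (\<Sum>i<m. a ^ i)"
      using prime_int prime_dvd_mult_iff by blast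
    then have "int p dvd a ^ m - 1"
      by (simp add: power_diff_1_eq)
    then have "[a ^ m = 1] (mod int p)" by (simp add: cong_iff_dvd_diff)
    moreover have "[multiplier (Suc k) x = a ^ m] (mod int p)"
      using cheb_deriv_power_cong[OF cheb_period_cong_prime[OF k, of x], of m] m
      unfolding multiplier_def a_def L_def by (simp add: power_mult)
    ultimately have "[multiplier (Suc k) x = 1] (mod int p)"
      using cong_trans by blast
    then show ?thesis by simp
  qed simp
  show ?thesis using m_pos m_lt m_eq m_disj by (rule that)
qed

lemma period_if_not_good:
  assumes "1 \<le> k" and "\<not> good k x"
  shows "\<exists>m<p. period k x = period 1 x * m \<and> (m = 1 \<or> [multiplier k x = 1] (mod int p))"
  using assms
proof (induction k rule: nat_induct_at_least)
  case base
  show ?case using p_gt_3 by (intro exI[of _ 1]) simp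
next
  case (Suc k)
  then have "\<not> good k x" using good_period_Suc(2) by blast
  then obtain m where m: "m < p" "period k x = period 1 x * m"
    "m = 1 \<or> [multiplier k x = 1] (mod int p)"
    using Suc.IH by blast
  show ?case
  proof (cases "[multiplier k x = 1] (mod int p)")
    case True
    then have "period (Suc k) x = period k x"
      using period_Suc_eq_if_dvd_lift_coeff \<open>\<not> good k x\<close> unfolding good_def by blast
    moreover from this have "multiplier (Suc k) x = multiplier k x"
      unfolding multiplier_def by simp
    ultimately show ?thesis using m True by auto
  next
    case False
    with m have "period k x = period 1 x" by simp
    obtain m' where "m' < p" "period (Suc k) x = period k x * m'"
      "m' = 1 \<or> [multiplier (Suc k) x = 1] (mod int p)"
      using period_Suc_if_multiplier_not_one[OF Suc.hyps False] by blast
    then show ?thesis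
      using \<open>period k x = period 1 x\<close> by auto
  qed
qed

lemma good_if_period_ge:
  assumes "1 \<le> k" and "p^2 \<le> period k x"
  shows "good k x"
proof (rule ccontr)
  assume "\<not> good k x"
  then obtain m where "m < p" "period k x = period 1 x * m"
    using period_if_not_good[OF assms(1)] by blast
  then have "period k x \<le> p * (p - 1)"
    using period_one_le[of x] by (simp add: mult_le_mono)
  also have "\<dots> < p^2"
    using p_gt_3 by (simp add: power2_eq_square algebra_simps)
  finally show False using assms(2) by simp
qed

lemma cycle_of_Suc_mod:
  assumes "x \<in> vertices (int p) (Suc k)"
  shows "(\<lambda>y. y mod int p ^ k) ` cycle_of (int p) n (Suc k) x = cycle_of (int p) n k (x mod int p ^ k)"
proof -
  have "x mod int p ^ k \<in> vertices (int p) k"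
    using prime by (simp add: vertices_def prime_gt_0_nat)
  moreover have "cheb (n^i) x mod int p ^ Suc k mod int p ^ k = cheb (n^i) (x mod int p ^ k) mod int p ^ k"
    for i
  proof -
    have "[cheb (n^i) (x mod int p ^ k) = cheb (n^i) x] (mod int p ^ k)"
      by (rule cheb_cong) (simp add: cong_def)
    then show ?thesis
      by (simp add: cong_def mod_mod_cancel le_imp_power_dvd)
  qed
  ultimately show ?thesis
    using cycle_of_eq_range assms by (simp add: image_image)
qed

lemma cycle_of_Suc_eq_preimage:
  assumes k: "1 \<le> k" and x: "x \<in> vertices (int p) (Suc k)" and big: "p^2 \<le> period k x"
  shows "cycle_of (int p) n (Suc k) x =
           {y \<in> vertices (int p) (Suc k). y mod int p ^ k \<in> cycle_of (int p) n k (x mod int p ^ k)}"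
    (is "?C = ?P")
proof (rule card_subset_eq)
  have xk: "x mod int p ^ k \<in> vertices (int p) k"
    using prime by (simp add: vertices_def prime_gt_0_nat)
  have vertices_Suc: "vertices (int p) (Suc k) = {0..<int p ^ k * int p}"
    by (simp add: vertices_def mult.commute)
  show "finite ?P"
    by (rule finite_subset[OF _ finite_atLeastLessThan_int]) (auto simp: vertices_def)
  show "?C \<subseteq> ?P"
    using cycle_of_subset[OF x] cycle_of_Suc_mod[OF x] by blast
  have "card ?P = p * card (cycle_of (int p) n k (x mod int p ^ k))"
    unfolding vertices_Suc using prime cycle_of_subset[OF xk]
    by (intro card_mod_preimage) (simp_all add: vertices_def prime_gt_0_nat)
  also have "\<dots> = p * period k x"
    using card_cycle_of[OF xk] period_cong[of "x mod int p ^ k" x k] by (simp add: cong_def)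
  also have "\<dots> = card ?C"
    using good_period_Suc(1)[OF k good_if_period_ge[OF k big]] card_cycle_of[OF x] by simp
  finally show "card ?C = card ?P" by simp
qed

lemma period_eq_if_period_Suc_eq:
  assumes k: "1 \<le> k" and T: "p^2 \<le> T" and per: "period (Suc k) x = p * T"
  shows "period k x = T"
proof -
  have "T \<le> period k x"
    using period_Suc_le[OF k, of x] per p_gt_3 by simp
  then have "good k x" using good_if_period_ge[OF k] T by simp
  then show ?thesis
    using good_period_Suc(1)[OF k] per p_gt_3 by simp
qed

lemma num_cycles_Suc:
  assumes k: "1 \<le> k" and T: "p^2 \<le> T"
  shows "num_cycles (int p) n (p * T) (Suc k) = num_cycles (int p) n T k"
proof -
  define A where "A = {C. \<exists>x\<in>vertices (int p) (Suc k). C = cycle_of (int p) n (Suc k) x \<and> card C = p * T}"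
  define B where "B = {D. \<exists>x\<in>vertices (int p) k. D = cycle_of (int p) n k x \<and> card D = T}"
  define proj where "proj C = (\<lambda>y. y mod int p ^ k) ` C" for C :: "int set"
  define lift where "lift D = {y \<in> vertices (int p) (Suc k). y mod int p ^ k \<in> D}" for D
  have A: "proj C \<in> B \<and> C = lift (proj C)" if "C \<in> A" for C
  proof -
    obtain x where x: "x \<in> vertices (int p) (Suc k)" "C = cycle_of (int p) n (Suc k) x"
      "card C = p * T"
      using \<open>C \<in> A\<close> unfolding A_def by blast
    have xk: "x mod int p ^ k \<in> vertices (int p) k"
      using prime by (simp add: vertices_def prime_gt_0_nat)
    have "period k x = T"
      using period_eq_if_period_Suc_eq[OF k T] card_cycle_of[OF x(1)] x(2,3) by simp
    moreover have "period k (x mod int p ^ k) = period k x"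
      by (rule period_cong) (simp add: cong_def)
    ultimately have "card (cycle_of (int p) n k (x mod int p ^ k)) = T"
      using card_cycle_of[OF xk] by simp
    then have "proj C \<in> B"
      unfolding B_def proj_def x(2) cycle_of_Suc_mod[OF x(1)] using xk by blast
    moreover have "p^2 \<le> period k x" using T \<open>period k x = T\<close> by simp
    then have "C = lift (proj C)"
      unfolding lift_def proj_def x(2) cycle_of_Suc_mod[OF x(1)]
      by (rule cycle_of_Suc_eq_preimage[OF k x(1)])
    ultimately show ?thesis ..
  qed
  have "B \<subseteq> proj ` A"
  proof
    fix D assume "D \<in> B"
    then obtain x where x: "x \<in> vertices (int p) k" "D = cycle_of (int p) n k x" "card D = T"
      unfolding B_def by blast
    have per: "period k x = T" using card_cycle_of[OF x(1)] x(2,3) by simp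
    have "int p ^ k \<le> int p ^ Suc k" using p_gt_3 by (intro power_increasing) simp_all
    then have x1: "x \<in> vertices (int p) (Suc k)" and xmod: "x mod int p ^ k = x"
      using x(1) by (auto simp: vertices_def)
    have "card (cycle_of (int p) n (Suc k) x) = p * T"
      using card_cycle_of[OF x1] good_period_Suc(1)[OF k good_if_period_ge[OF k]] per T by simp
    then have "cycle_of (int p) n (Suc k) x \<in> A"
      unfolding A_def using x1 by blast
    moreover have "proj (cycle_of (int p) n (Suc k) x) = D"
      unfolding proj_def cycle_of_Suc_mod[OF x1] xmod x(2) ..
    ultimately show "D \<in> proj ` A" by blast
  qed
  then have "proj ` A = B" using A by blast
  moreover have "inj_on proj A"
  proof (rule inj_onI)
    fix C1 C2 assume "C1 \<in> A" "C2 \<in> A" "proj C1 = proj C2"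
    then show "C1 = C2" using A[of C1] A[of C2] by metis
  qed
  ultimately have "card A = card B"
    using card_image by metis
  then show ?thesis unfolding num_cycles_def A_def B_def .
qed

end

theorem theorem2:
  fixes p :: int and n k Tc :: nat
  assumes "prime p" and "p > 3" and "n > 1"
    and "gcd (int n) p = 1" and "gcd (int n) (p^2 - 1) = 1"
    and "k \<ge> 1" and "Tc \<ge> 1" and "int Tc \<ge> p^2"
  shows "num_cycles p n (nat p * Tc) (k + 1) = num_cycles p n Tc k"
proof -
  define q where "q = nat p"
  have p: "p = int q" using assms(2) q_def by simp
  interpret cheb_permutation q n
  proof
    show "prime q" "3 < q" using assms(1,2) p by simp_all
    have "coprime (int n) p" using assms(4) by (simp add: coprime_iff_gcd_eq_1)
    then show "\<not> q dvd n"
      using assms(1) p coprime_common_divisor[of "int n" p p] by auto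
    have "int (q^2 - 1) = p^2 - 1" using assms(2) p by (simp add: of_nat_diff)
    then show "coprime n (q^2 - 1)"
      using assms(5) by (metis coprime_iff_gcd_eq_1 coprime_int_iff)
  qed
  have "q^2 \<le> Tc" using assms(8) p by (simp flip: of_nat_power)
  then show ?thesis using num_cycles_Suc[OF assms(6)] p by simp
qed

end
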